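(* Let $\mathbb{K}$ be a field, $R=\mathbb{K}[X_1,\ldots,X_n]$, $J\subsetneq I\subset R$ monomial ideals. Let $I'$ and $J'$ be the monomial ideals in $\mathbb{K}[X_1,\ldots,X_n,X_{n+1}]$ obtained from $I$ and $J$ by replacing, in each minimal generator of $I$ and $J$, every occurrence of the variable $X_n$ by the product $X_nX_{n+1}$. Then $\operatorname{sdepth} I'/J'=\operatorname{sdepth} I/J+1$.
   Context: Stanley depth: with the fine multigrading, a Stanley decomposition of a finitely generated multigraded module $M$ is a finite family $(\mathbb{K}[Z_i], m_i)$ with $m_i$ homogeneous, $Z_i$ subsets of the variables, $m_i\mathbb{K}[Z_i]$ free over $\mathbb{K}[Z_i]$, and $M=\bigoplus_i m_i\mathbb{K}[Z_i]$ as multigraded $\mathbb{K}$-vector spaces; its depth is $\min_i|Z_i|$, and $\operatorname{sdepth}M$ is the maximal depth of a Stanley decomposition. *)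

theory Defs
  imports Main
begin

text \<open>Monomials of K[X_1..X_n] are encoded as exponent vectors nat => nat supported on
  {0..<n} (variable X_(i+1) has index i). A monomial ideal is encoded by its set of
  monomials (which is a K-basis of it); the fine multigraded structure of I/J has
  K-basis the monomials in I - J, each multidegree component being one-dimensional.\<close>

type_synonym mon = "nat \<Rightarrow> nat"

definition monoms :: "nat \<Rightarrow> mon set" where
  "monoms n = {a. \<forall>i\<ge>n. a i = 0}"

definition mon_ideal :: "nat \<Rightarrow> mon set \<Rightarrow> bool" where
  "mon_ideal n I \<longleftrightarrow> I \<subseteq> monoms n \<and> (\<forall>a\<in>I. \<forall>b\<in>monoms n. (\<lambda>i. a i + b i) \<in> I)"

definition min_gens :: "mon set \<Rightarrow> mon set" where
  "min_gens I = {a\<in>I. \<forall>b\<in>I. (\<forall>i. b i \<le> a i) \<longrightarrow> b = a}"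

definition gen_ideal :: "nat \<Rightarrow> mon set \<Rightarrow> mon set" where
  "gen_ideal n S = {w\<in>monoms n. \<exists>a\<in>S. \<forall>i. a i \<le> w i}"

text \<open>Replace X_n by X_n X_(n+1): the exponent of new variable (index n) equals
  that of X_n (index n-1).\<close>
definition subst_last :: "nat \<Rightarrow> mon \<Rightarrow> mon" where
  "subst_last n a = a(n := a (n - 1))"

definition lift_ideal :: "nat \<Rightarrow> mon set \<Rightarrow> mon set" where
  "lift_ideal n I = gen_ideal (Suc n) (subst_last n ` min_gens I)"

definition cone :: "mon \<Rightarrow> nat set \<Rightarrow> mon set" where
  "cone u Z = {w. (\<forall>i. u i \<le> w i) \<and> (\<forall>i. i \<notin> Z \<longrightarrow> w i = u i)}"

text \<open>Stanley decomposition of I/J: finite family of pairs (u,Z), u a monomial of I/J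
  (nonzero homogeneous element), u K[Z] free (no monomial u*v, v in K[Z], lies in J),
  and I/J the direct sum of the u K[Z] as multigraded vector spaces.\<close>
definition stanley_decomp :: "nat \<Rightarrow> mon set \<Rightarrow> mon set \<Rightarrow> (mon \<times> nat set) set \<Rightarrow> bool" where
  "stanley_decomp n I J D \<longleftrightarrow> finite D \<and>
     (\<forall>(u, Z)\<in>D. Z \<subseteq> {..<n} \<and> u \<in> monoms n \<and> u \<in> I \<and> u \<notin> J \<and> cone u Z \<inter> J = {}) \<and>
     (\<forall>p\<in>D. \<forall>q\<in>D. p \<noteq> q \<longrightarrow> cone (fst p) (snd p) \<inter> cone (fst q) (snd q) = {}) \<and>
     (\<Union>(u, Z)\<in>D. cone u Z) = I - J"

definition sdecomp_depth :: "(mon \<times> nat set) set \<Rightarrow> nat" where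
  "sdecomp_depth D = Min ((\<lambda>(u, Z). card Z) ` D)"

definition sdepth :: "nat \<Rightarrow> mon set \<Rightarrow> mon set \<Rightarrow> nat" where
  "sdepth n I J = Max {sdecomp_depth D | D. stanley_decomp n I J D}"

end

theory Submission
  imports Defs
begin

text \<open>Write subst_last n for the substitution X_n \<mapsto> X_n X_(n+1) and merge_last n for the map
  merging the exponents of X_n and X_(n+1) into their minimum. A monomial w lies in the lifted ideal
  I' iff merge_last n w lies in I, and subst_last n w lies in I' iff w lies in I. So Stanley
  decompositions can be pulled back along both maps. The preimage of u K[Z] under the merge is one
  or two Stanley spaces with one more variable each, which gives sdepth I'/J' \<ge> sdepth I/J + 1.
  The intersection of v K[Y] with the diagonal (equal exponents of X_n and X_(n+1)) is empty or
  the image of a Stanley space with at most one variable less, which gives the converse.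

  Stanley decompositions exist because membership in a monomial ideal only depends on the exponents
  truncated at some bound M; the fibres of this truncation are Stanley spaces.\<close>


definition trunc :: "nat \<Rightarrow> mon \<Rightarrow> mon" where
  "trunc M w = (\<lambda>i. min (w i) M)"

definition up_closed :: "nat \<Rightarrow> mon set \<Rightarrow> bool" where
  "up_closed n U \<longleftrightarrow> U \<subseteq> monoms n \<and> (\<forall>a\<in>U. \<forall>b\<in>monoms n. (\<forall>i. a i \<le> b i) \<longrightarrow> b \<in> U)"

definition trunc_determined :: "nat \<Rightarrow> mon set \<Rightarrow> nat \<Rightarrow> bool" where
  "trunc_determined n U M \<longleftrightarrow> (\<forall>w\<in>monoms n. w \<in> U \<longleftrightarrow> trunc M w \<in> U)"

lemma trunc_monoms: "w \<in> monoms n \<Longrightarrow> trunc M w \<in> monoms n"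
  by (auto simp: monoms_def trunc_def)

lemma trunc_le: "trunc M w i \<le> w i"
  by (simp add: trunc_def)

lemma trunc_trunc: "M \<le> M' \<Longrightarrow> trunc M (trunc M' w) = trunc M w"
  by (auto simp: trunc_def min_def)

lemma trunc_determined_mono: "trunc_determined n U M \<Longrightarrow> M \<le> M' \<Longrightarrow> trunc_determined n U M'"
  unfolding trunc_determined_def by (metis trunc_monoms trunc_trunc)

lemma up_closedD: "up_closed n U \<Longrightarrow> a \<in> U \<Longrightarrow> b \<in> monoms n \<Longrightarrow> (\<And>i. a i \<le> b i) \<Longrightarrow> b \<in> U"
  unfolding up_closed_def by blast

lemma mon_ideal_up_closed:
  assumes "mon_ideal n I"
  shows "up_closed n I"
  unfolding up_closed_def
proof (intro conjI ballI impI)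
  show "I \<subseteq> monoms n" using assms by (simp add: mon_ideal_def)
  fix a b assume a: "a \<in> I" and b: "b \<in> monoms n" and le: "\<forall>i. a i \<le> b i"
  have "(\<lambda>i. b i - a i) \<in> monoms n" using b by (auto simp: monoms_def)
  then have "(\<lambda>i. a i + (b i - a i)) \<in> I" using assms a by (simp add: mon_ideal_def)
  moreover have "(\<lambda>i. a i + (b i - a i)) = b" using le by (simp add: fun_eq_iff)
  ultimately show "b \<in> I" by simp
qed

lemma finite_bounded_monoms: "finite {t \<in> monoms n. \<forall>i. t i \<le> M}"
proof (rule finite_subset)
  show "{t \<in> monoms n. \<forall>i. t i \<le> M} \<subseteq> {f. \<forall>i. (i \<in> {..<n} \<longrightarrow> f i \<in> {..M}) \<and> (i \<notin> {..<n} \<longrightarrow> f i = 0)}"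
    by (auto simp: monoms_def)
qed (rule finite_set_of_finite_funs; simp)

lemma finite_subset_mono_UN:
  fixes S :: "nat \<Rightarrow> 'a set"
  assumes "finite B" "B \<subseteq> (\<Union>k. S k)" "mono S"
  shows "\<exists>K. B \<subseteq> S K"
  using assms(1,2)
proof (induction B rule: finite_induct)
  case (insert x B)
  then obtain K k where "B \<subseteq> S K" "x \<in> S k" by blast
  then have "insert x B \<subseteq> S (max K k)"
    using monoD[OF \<open>mono S\<close>, of K "max K k"] monoD[OF \<open>mono S\<close>, of k "max K k"] by auto
  then show ?case ..
qed simp

text \<open>The union is generated by the finitely many truncated monomials it contains.\<close>
lemma up_closed_chain_stabilises:
  fixes S :: "nat \<Rightarrow> mon set"
  assumes up: "\<And>k. up_closed n (S k)" and "mono S"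
    and det: "trunc_determined n (\<Union>k. S k) M"
  shows "\<exists>K. \<forall>k\<ge>K. S k = (\<Union>k. S k)"
proof -
  let ?B = "{t \<in> monoms n. \<forall>i. t i \<le> M} \<inter> (\<Union>k. S k)"
  obtain K where K: "?B \<subseteq> S K"
    using finite_subset_mono_UN[OF _ _ \<open>mono S\<close>, of ?B] finite_bounded_monoms by blast
  have "S k = (\<Union>k. S k)" if "K \<le> k" for k
  proof
    show "(\<Union>k. S k) \<subseteq> S k"
    proof
      fix a assume a: "a \<in> (\<Union>k. S k)"
      then have am: "a \<in> monoms n" using up unfolding up_closed_def by blast
      have "trunc M a \<in> (\<Union>k. S k)"
        using det a am unfolding trunc_determined_def by blast
      moreover have "\<forall>i. trunc M a i \<le> M" by (simp add: trunc_def)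
      ultimately have "trunc M a \<in> ?B" using trunc_monoms[OF am] by blast
      then have "trunc M a \<in> S k" using K monoD[OF \<open>mono S\<close> that] by blast
      then show "a \<in> S k" using up_closedD[OF up[of k] _ am] trunc_le by blast
    qed
  qed (rule UN_upper, simp)
  then show ?thesis by blast
qed

lemma up_closed_Union:
  assumes "\<And>k. up_closed n (S k)"
  shows "up_closed n (\<Union>k. S k)"
  using assms unfolding up_closed_def by (simp add: UN_subset_iff) blast

definition slice :: "nat \<Rightarrow> mon set \<Rightarrow> nat \<Rightarrow> mon set" where
  "slice n U k = {a \<in> monoms n. a(n := k) \<in> U}"

lemma fun_upd_monoms: "a \<in> monoms n \<Longrightarrow> a(n := k) \<in> monoms (Suc n)"
  by (auto simp: monoms_def)

lemma up_closed_slice: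
  assumes "up_closed (Suc n) U"
  shows "up_closed n (slice n U k)"
  unfolding up_closed_def
proof (intro conjI ballI impI)
  fix a b assume "a \<in> slice n U k" "b \<in> monoms n" "\<forall>i. a i \<le> b i"
  then show "b \<in> slice n U k"
    using up_closedD[OF assms, of "a(n := k)" "b(n := k)"] by (auto simp: slice_def fun_upd_monoms)
qed (auto simp: slice_def)

lemma mono_slice:
  assumes "up_closed (Suc n) U"
  shows "mono (slice n U)"
proof (rule monoI, rule subsetI)
  fix k k' :: nat and a assume "k \<le> k'" "a \<in> slice n U k"
  then show "a \<in> slice n U k'"
    using up_closedD[OF assms, of "a(n := k)" "a(n := k')"] by (auto simp: slice_def fun_upd_monoms)
qed

lemma up_closed_trunc_determined: "up_closed n U \<Longrightarrow> \<exists>M. trunc_determined n U M"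
proof (induction n arbitrary: U)
  case 0
  have "trunc 0 w = w" if "w \<in> monoms 0" for w
    using that by (auto simp: monoms_def trunc_def)
  then have "trunc_determined 0 U 0" by (simp add: trunc_determined_def)
  then show ?case ..
next
  case (Suc n)
  let ?S = "slice n U" and ?Sinf = "\<Union>k. slice n U k"
  have up: "up_closed n (?S k)" for k using up_closed_slice[OF Suc.prems] .
  obtain Minf where Minf: "trunc_determined n ?Sinf Minf"
    using Suc.IH[OF up_closed_Union] up by blast
  obtain K where K: "\<And>k. K \<le> k \<Longrightarrow> ?S k = ?Sinf"
    using up_closed_chain_stabilises[OF up mono_slice[OF Suc.prems] Minf] by blast
  obtain Mf where Mf: "\<And>k. trunc_determined n (?S k) (Mf k)"
    using Suc.IH[OF up] by metis
  define M where "M = K + Minf + sum Mf {..K}"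
  have M: "K \<le> M" "Minf \<le> M" "\<And>k. k \<le> K \<Longrightarrow> Mf k \<le> M"
    unfolding M_def using member_le_sum[of _ "{..K}" Mf] by fastforce+
  \<comment> \<open>Slices below K are determined by their own bounds; from K on they equal their union.\<close>
  have slice_det: "trunc_determined n (?S k) M \<and> ?S (min k M) = ?S k" for k
  proof (cases "k \<le> K")
    case True
    then show ?thesis using trunc_determined_mono[OF Mf M(3)] M(1) by (simp add: min_absorb1)
  next
    case False
    then show ?thesis using K[of k] K[of "min k M"] trunc_determined_mono[OF Minf M(2)] M(1) by simp
  qed
  have "trunc_determined (Suc n) U M"
    unfolding trunc_determined_def
  proof
    fix w assume w: "w \<in> monoms (Suc n)"
    define w' where "w' = w(n := 0)"
    have w': "w' \<in> monoms n" "w = w'(n := w n)"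
      using w by (auto simp: w'_def monoms_def)
    have "trunc M w = (trunc M w')(n := min (w n) M)"
      by (simp add: w'_def trunc_def fun_eq_iff)
    then have "trunc M w \<in> U \<longleftrightarrow> trunc M w' \<in> ?S (min (w n) M)"
      using trunc_monoms[OF w'(1)] by (simp add: slice_def)
    moreover have "w \<in> U \<longleftrightarrow> w' \<in> ?S (w n)"
      using w' by (metis (no_types, lifting) mem_Collect_eq slice_def)
    ultimately show "w \<in> U \<longleftrightarrow> trunc M w \<in> U"
      using slice_det[of "w n"] w'(1) by (simp add: trunc_determined_def)
  qed
  then show ?case ..
qed

lemma mem_cone: "w \<in> cone u Z \<longleftrightarrow> (\<forall>i. u i \<le> w i \<and> (i \<notin> Z \<longrightarrow> w i = u i))"
  unfolding cone_def by blast

lemma cone_base: "u \<in> cone u Z"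
  by (simp add: cone_def)

lemma cone_monoms:
  assumes "u \<in> monoms n" "Z \<subseteq> {..<n}"
  shows "cone u Z \<subseteq> monoms n"
proof
  fix w assume "w \<in> cone u Z"
  moreover have "i \<notin> Z" "u i = 0" if "n \<le> i" for i
    using assms that by (auto simp: monoms_def)
  ultimately show "w \<in> monoms n" by (simp add: cone_def monoms_def)
qed

lemma cone_eq_trunc_fibre:
  assumes t: "t \<in> monoms n" "\<forall>i. t i \<le> M"
  shows "cone t {i. i < n \<and> t i = M} = {w \<in> monoms n. trunc M w = t}"
proof -
  have "(t i \<le> w i \<and> (i \<notin> {i. i < n \<and> t i = M} \<longrightarrow> w i = t i)) \<longleftrightarrow>
      (n \<le> i \<longrightarrow> w i = 0) \<and> min (w i) M = t i" for w i
  proof (cases "i < n")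
    case True
    then show ?thesis using t(2)[rule_format, of i] by (auto simp: min_def)
  next
    case False
    then show ?thesis using t(1) by (auto simp: monoms_def)
  qed
  then show ?thesis unfolding mem_cone set_eq_iff by (auto simp: monoms_def trunc_def fun_eq_iff)
qed

lemma stanley_decompI:
  assumes "finite D" "I \<subseteq> monoms n"
    and vars: "\<And>u Z. (u, Z) \<in> D \<Longrightarrow> Z \<subseteq> {..<n}"
    and disj: "\<And>p q. p \<in> D \<Longrightarrow> q \<in> D \<Longrightarrow> p \<noteq> q \<Longrightarrow> cone (fst p) (snd p) \<inter> cone (fst q) (snd q) = {}"
    and cover: "(\<Union>(u, Z)\<in>D. cone u Z) = I - J"
  shows "stanley_decomp n I J D"
proof -
  have "Z \<subseteq> {..<n} \<and> u \<in> monoms n \<and> u \<in> I \<and> u \<notin> J \<and> cone u Z \<inter> J = {}" if "(u, Z) \<in> D" for u Z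
  proof -
    have "cone u Z \<subseteq> I - J" using cover that by blast
    then show ?thesis using vars[OF that] cone_base[of u Z] \<open>I \<subseteq> monoms n\<close> by blast
  qed
  then show ?thesis unfolding stanley_decomp_def using assms(1) disj cover by blast
qed

lemma stanley_decompD:
  assumes "stanley_decomp n I J D"
  shows "finite D" and "(u, Z) \<in> D \<Longrightarrow> Z \<subseteq> {..<n} \<and> u \<in> monoms n"
    and "p \<in> D \<Longrightarrow> q \<in> D \<Longrightarrow> p \<noteq> q \<Longrightarrow> cone (fst p) (snd p) \<inter> cone (fst q) (snd q) = {}"
    and "(\<Union>(u, Z)\<in>D. cone u Z) = I - J"
proof -
  note decomp = assms[unfolded stanley_decomp_def]
  show "finite D" "(\<Union>(u, Z)\<in>D. cone u Z) = I - J" using decomp by blast+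
  show "p \<in> D \<Longrightarrow> q \<in> D \<Longrightarrow> p \<noteq> q \<Longrightarrow> cone (fst p) (snd p) \<inter> cone (fst q) (snd q) = {}"
    using decomp by blast
  show "(u, Z) \<in> D \<Longrightarrow> Z \<subseteq> {..<n} \<and> u \<in> monoms n"
    using decomp by (metis (no_types, lifting) case_prodD)
qed

text \<open>The fibres of truncation at M are Stanley spaces, and membership in I - J is constant on them.\<close>
lemma stanley_decomp_trunc_fibres:
  assumes I: "I \<subseteq> monoms n" and det: "trunc_determined n I M" "trunc_determined n J M"
  defines "T \<equiv> {t \<in> monoms n. \<forall>i. t i \<le> M} \<inter> (I - J)"
  shows "stanley_decomp n I J ((\<lambda>t. (t, {i. i < n \<and> t i = M})) ` T)"
proof (rule stanley_decompI)
  have IJ: "w \<in> I - J \<longleftrightarrow> trunc M w \<in> I - J" if "w \<in> monoms n" for w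
    using det that unfolding trunc_determined_def by blast
  have fibre: "cone t {i. i < n \<and> t i = M} = {w \<in> monoms n. trunc M w = t}" if "t \<in> T" for t
    using that unfolding T_def by (intro cone_eq_trunc_fibre) auto
  show "finite ((\<lambda>t. (t, {i. i < n \<and> t i = M})) ` T)"
    unfolding T_def using finite_bounded_monoms by (intro finite_imageI) blast
  show "I \<subseteq> monoms n" by (fact I)
  show "\<And>u Z. (u, Z) \<in> (\<lambda>t. (t, {i. i < n \<and> t i = M})) ` T \<Longrightarrow> Z \<subseteq> {..<n}" by auto
  show "cone (fst p) (snd p) \<inter> cone (fst q) (snd q) = {}"
    if pq: "p \<in> (\<lambda>t. (t, {i. i < n \<and> t i = M})) ` T" "q \<in> (\<lambda>t. (t, {i. i < n \<and> t i = M})) ` T"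
      "p \<noteq> q" for p q
  proof -
    obtain t t' where "t \<in> T" "t' \<in> T" "t \<noteq> t'"
      "p = (t, {i. i < n \<and> t i = M})" "q = (t', {i. i < n \<and> t' i = M})"
      using pq by auto
    then show ?thesis using fibre by (simp add: disjoint_iff)
  qed
  have "(\<Union>(u, Z)\<in>(\<lambda>t. (t, {i. i < n \<and> t i = M})) ` T. cone u Z) = (\<Union>t\<in>T. cone t {i. i < n \<and> t i = M})"
    by (simp add: image_image)
  also have "\<dots> = I - J"
  proof (rule subset_antisym)
    show "(\<Union>t\<in>T. cone t {i. i < n \<and> t i = M}) \<subseteq> I - J"
    proof (rule UN_least)
      fix t assume t: "t \<in> T"
      show "cone t {i. i < n \<and> t i = M} \<subseteq> I - J"
        unfolding fibre[OF t] using IJ t unfolding T_def by auto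
    qed
    show "I - J \<subseteq> (\<Union>t\<in>T. cone t {i. i < n \<and> t i = M})"
    proof
      fix w assume w: "w \<in> I - J"
      then have wm: "w \<in> monoms n" using I by blast
      have "\<forall>i. trunc M w i \<le> M" by (simp add: trunc_def)
      then have tT: "trunc M w \<in> T" using w IJ[OF wm] trunc_monoms[OF wm] unfolding T_def by blast
      then show "w \<in> (\<Union>t\<in>T. cone t {i. i < n \<and> t i = M})"
        using fibre[OF tT] wm by blast
    qed
  qed
  finally show "(\<Union>(u, Z)\<in>(\<lambda>t. (t, {i. i < n \<and> t i = M})) ` T. cone u Z) = I - J" .
qed

lemma stanley_decomp_exists:
  assumes I: "mon_ideal n I" and J: "mon_ideal n J"
  shows "\<exists>D. stanley_decomp n I J D"
proof -
  obtain MI MJ where "trunc_determined n I MI" "trunc_determined n J MJ"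
    using up_closed_trunc_determined mon_ideal_up_closed[OF I] mon_ideal_up_closed[OF J] by meson
  then have "trunc_determined n I (max MI MJ)" "trunc_determined n J (max MI MJ)"
    by (simp_all add: trunc_determined_mono)
  moreover have "I \<subseteq> monoms n" using I by (simp add: mon_ideal_def)
  ultimately show ?thesis using stanley_decomp_trunc_fibres by blast
qed

definition merge_last :: "nat \<Rightarrow> mon \<Rightarrow> mon" where
  "merge_last n w = (\<lambda>i. if i < n - 1 then w i else if i = n - 1 then min (w (n - 1)) (w n) else 0)"

lemma merge_last_monoms: "n \<ge> 1 \<Longrightarrow> merge_last n w \<in> monoms n"
  by (auto simp: merge_last_def monoms_def)

lemma subst_last_monoms: "n \<ge> 1 \<Longrightarrow> w \<in> monoms n \<Longrightarrow> subst_last n w \<in> monoms (Suc n)"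
  by (simp add: subst_last_def monoms_def)

lemma merge_last_subst_last: "n \<ge> 1 \<Longrightarrow> w \<in> monoms n \<Longrightarrow> merge_last n (subst_last n w) = w"
  by (auto simp: merge_last_def subst_last_def monoms_def fun_eq_iff)

text \<open>The substitution and the merge form a Galois connection for divisibility.\<close>
lemma subst_last_le_iff:
  assumes "n \<ge> 1" "g \<in> monoms n"
  shows "(\<forall>i. subst_last n g i \<le> w i) \<longleftrightarrow> (\<forall>i. g i \<le> merge_last n w i)"
proof
  have g0: "g i = 0" if "n \<le> i" for i using assms(2) that by (simp add: monoms_def)
  have n1: "n - 1 \<noteq> n" "n - 1 < n" using assms(1) by auto
  assume le: "\<forall>i. subst_last n g i \<le> w i"
  show "\<forall>i. g i \<le> merge_last n w i"
  proof
    fix i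
    have "g i \<le> w i" if "i \<noteq> n" using le[rule_format, of i] that by (simp add: subst_last_def)
    moreover have "g (n - 1) \<le> w n" using le[rule_format, of n] by (simp add: subst_last_def)
    ultimately show "g i \<le> merge_last n w i"
      using g0[of i] n1 by (auto simp: merge_last_def)
  qed
next
  have g0: "g i = 0" if "n \<le> i" for i using assms(2) that by (simp add: monoms_def)
  assume le: "\<forall>i. g i \<le> merge_last n w i"
  show "\<forall>i. subst_last n g i \<le> w i"
  proof
    fix i
    consider "i < n - 1" | "i = n - 1" | "i = n" | "n < i" using assms(1) by linarith
    then show "subst_last n g i \<le> w i"
    proof cases
      case 3
      then show ?thesis using le[rule_format, of "n - 1"] by (simp add: subst_last_def merge_last_def)
    qed (use le[rule_format, of i] g0[of i] assms(1) in \<open>auto simp: subst_last_def merge_last_def\<close>)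
  qed
qed

text \<open>A divisor of a in I of least total degree is a minimal generator.\<close>
lemma min_gens_below:
  assumes "mon_ideal n I" "a \<in> I"
  shows "\<exists>g\<in>min_gens I. \<forall>i. g i \<le> a i"
proof -
  let ?P = "\<lambda>b. b \<in> I \<and> (\<forall>i. b i \<le> a i)"
  obtain g where g: "?P g" and least: "\<And>c. ?P c \<Longrightarrow> sum g {..<n} \<le> sum c {..<n}"
    using ex_has_least_nat[of ?P a "\<lambda>b. sum b {..<n}"] assms(2) by auto
  have "c = g" if c: "c \<in> I" "\<forall>i. c i \<le> g i" for c
  proof (rule ccontr)
    assume "c \<noteq> g"
    then obtain i where i: "c i < g i" using c(2) by (metis ext le_neq_implies_less)
    moreover have "i < n"
    proof (rule ccontr)
      assume "\<not> i < n"
      then have "g i = 0" using g assms(1) by (auto simp: mon_ideal_def monoms_def)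
      then show False using i by simp
    qed
    ultimately have "sum c {..<n} < sum g {..<n}"
      using c(2) by (intro sum_strict_mono_ex1) auto
    moreover have "sum g {..<n} \<le> sum c {..<n}" using c g by (intro least) (auto intro: le_trans)
    ultimately show False by simp
  qed
  then have "g \<in> min_gens I" using g by (simp add: min_gens_def)
  then show ?thesis using g by blast
qed

lemma lift_ideal_eq:
  assumes n: "n \<ge> 1" and I: "mon_ideal n I"
  shows "lift_ideal n I = {w \<in> monoms (Suc n). merge_last n w \<in> I}"
proof (intro equalityI subsetI)
  have gens: "g \<in> I" "g \<in> monoms n" if "g \<in> min_gens I" for g
    using that I by (auto simp: min_gens_def mon_ideal_def)
  fix w
  assume "w \<in> lift_ideal n I"
  then obtain g where w: "w \<in> monoms (Suc n)" and g: "g \<in> min_gens I" "\<forall>i. subst_last n g i \<le> w i"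
    by (auto simp: lift_ideal_def gen_ideal_def)
  then have "merge_last n w \<in> I"
    using up_closedD[OF mon_ideal_up_closed[OF I] gens(1)[OF g(1)] merge_last_monoms[OF n]]
      subst_last_le_iff[OF n gens(2)[OF g(1)]] by blast
  then show "w \<in> {w \<in> monoms (Suc n). merge_last n w \<in> I}" using w by blast
next
  fix w
  assume w: "w \<in> {w \<in> monoms (Suc n). merge_last n w \<in> I}"
  then obtain g where g: "g \<in> min_gens I" "\<forall>i. g i \<le> merge_last n w i"
    using min_gens_below[OF I] by blast
  moreover have "g \<in> monoms n" using g(1) I by (auto simp: min_gens_def mon_ideal_def)
  ultimately have "\<forall>i. subst_last n g i \<le> w i" using subst_last_le_iff[OF n] by blast
  then show "w \<in> lift_ideal n I" using w g(1) by (auto simp: lift_ideal_def gen_ideal_def)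
qed

lemma mem_cone_split:
  "w \<in> cone u Z \<longleftrightarrow> (\<forall>i. i \<noteq> n - 1 \<and> i \<noteq> n \<longrightarrow> u i \<le> w i \<and> (i \<notin> Z \<longrightarrow> w i = u i))
    \<and> (u (n - 1) \<le> w (n - 1) \<and> (n - 1 \<notin> Z \<longrightarrow> w (n - 1) = u (n - 1)))
    \<and> (u n \<le> w n \<and> (n \<notin> Z \<longrightarrow> w n = u n))"
  unfolding mem_cone by metis

text \<open>The preimage of u K[Z] under the merge. If X_n is free in Z, it is the cone over the
  substituted u with X_(n+1) added. Otherwise the merged exponent must equal e = u (n - 1),
  and the solutions of min a b = e with a, b \<ge> e split into a = e and (a > e, b = e).\<close>
definition lift_cones :: "nat \<Rightarrow> mon \<Rightarrow> nat set \<Rightarrow> (mon \<times> nat set) set" where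
  "lift_cones n u Z =
    (if n - 1 \<in> Z then {(subst_last n u, insert n Z)}
     else {(subst_last n u, insert n Z), ((subst_last n u)(n - 1 := Suc (u (n - 1))), insert (n - 1) Z)})"

lemma subst_last_eq: "i \<noteq> n \<Longrightarrow> subst_last n w i = w i"
  by (simp add: subst_last_def)

lemma merge_last_mem_cone:
  assumes n: "n \<ge> 1" and u: "u \<in> monoms n" and Z: "Z \<subseteq> {..<n}" and w: "w \<in> monoms (Suc n)"
  shows "merge_last n w \<in> cone u Z \<longleftrightarrow> (\<exists>(v, Y)\<in>lift_cones n u Z. w \<in> cone v Y)"
proof -
  have n1: "n - 1 \<noteq> n" "n \<notin> Z" "u n = 0" using Z u n by (auto simp: monoms_def)
  have "merge_last n w i = w i" if "i \<noteq> n - 1" "i \<noteq> n" for i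
    using that w by (auto simp: merge_last_def monoms_def)
  moreover have "merge_last n w (n - 1) = min (w (n - 1)) (w n)" "merge_last n w n = 0"
    using n1 by (auto simp: merge_last_def)
  \<comment> \<open>imp_cong lets the simplifier use the guards i \<noteq> n - 1, i \<noteq> n on the other coordinates.\<close>
  ultimately show ?thesis
    unfolding mem_cone_split[where n = n] lift_cones_def using n1
    by (simp add: subst_last_eq cong: imp_cong) (auto simp: subst_last_def min_def)
qed

lemma lift_cones_wf:
  assumes n: "n \<ge> 1" and u: "u \<in> monoms n" and Z: "Z \<subseteq> {..<n}" and vY: "(v, Y) \<in> lift_cones n u Z"
  shows "Y \<subseteq> {..<Suc n}" "v \<in> monoms (Suc n)" "card Y = Suc (card Z)"
proof -
  have "n \<notin> Z" "finite Z" using Z finite_subset by auto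
  then show "Y \<subseteq> {..<Suc n}" "v \<in> monoms (Suc n)" "card Y = Suc (card Z)"
    using vY Z u n by (auto simp: lift_cones_def monoms_def subst_last_def split: if_splits)
qed

lemma lift_cones_disjoint:
  assumes n: "n \<ge> 1" and p: "p \<in> lift_cones n u Z" and q: "q \<in> lift_cones n u Z" and "p \<noteq> q"
  shows "cone (fst p) (snd p) \<inter> cone (fst q) (snd q) = {}"
proof -
  have "n - 1 \<notin> Z" using p q \<open>p \<noteq> q\<close> by (auto simp: lift_cones_def split: if_splits)
  then have "w (n - 1) = u (n - 1)" if "w \<in> cone (subst_last n u) (insert n Z)" for w
    using that n by (auto simp: mem_cone subst_last_def)
  moreover have "Suc (u (n - 1)) \<le> w (n - 1)"
    if "w \<in> cone ((subst_last n u)(n - 1 := Suc (u (n - 1)))) (insert (n - 1) Z)" for w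
    using that unfolding mem_cone by (metis fun_upd_same)
  ultimately show ?thesis
    using p q \<open>p \<noteq> q\<close> by (auto simp: lift_cones_def split: if_splits) fastforce+
qed

text \<open>The image of the substitution is the diagonal where X_n and X_(n+1) have equal exponents.
  It meets v K[Y] iff meets_diag n v Y, and the intersection is then the image of the cone below:
  the common exponent is at least the maximum of v (n - 1) and v n, and is free only if both
  variables are.\<close>
definition meets_diag :: "nat \<Rightarrow> mon \<Rightarrow> nat set \<Rightarrow> bool" where
  "meets_diag n v Y \<longleftrightarrow> (n \<in> Y \<or> v (n - 1) \<le> v n) \<and> (n - 1 \<in> Y \<or> v n \<le> v (n - 1))"

definition diag_base :: "nat \<Rightarrow> mon \<Rightarrow> mon" where
  "diag_base n v = (\<lambda>i. if i < n - 1 then v i else if i = n - 1 then max (v (n - 1)) (v n) else 0)"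

definition diag_vars :: "nat \<Rightarrow> nat set \<Rightarrow> nat set" where
  "diag_vars n Y = (if n - 1 \<in> Y \<and> n \<in> Y then Y - {n} else Y - {n - 1, n})"

lemma subst_last_mem_cone:
  assumes n: "n \<ge> 1" and v: "v \<in> monoms (Suc n)" and w: "w \<in> monoms n"
  shows "subst_last n w \<in> cone v Y \<longleftrightarrow> meets_diag n v Y \<and> w \<in> cone (diag_base n v) (diag_vars n Y)"
proof -
  have n1: "n - 1 \<noteq> n" "w n = 0" using n w by (auto simp: monoms_def)
  have "diag_base n v i = v i" "i \<in> diag_vars n Y \<longleftrightarrow> i \<in> Y" if "i \<noteq> n - 1" "i \<noteq> n" for i
    using that v by (auto simp: diag_base_def diag_vars_def monoms_def)
  moreover have "diag_base n v (n - 1) = max (v (n - 1)) (v n)" "diag_base n v n = 0"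
    "n - 1 \<in> diag_vars n Y \<longleftrightarrow> n - 1 \<in> Y \<and> n \<in> Y" "n \<notin> diag_vars n Y"
    using n1 by (auto simp: diag_base_def diag_vars_def)
  ultimately show ?thesis
    unfolding mem_cone_split[where n = n] meets_diag_def using n1
    by (simp add: subst_last_eq cong: imp_cong) (auto simp: subst_last_def max_def)
qed

lemma diag_wf:
  assumes n: "n \<ge> 1" and Y: "Y \<subseteq> {..<Suc n}"
  shows "diag_vars n Y \<subseteq> {..<n}" "diag_base n v \<in> monoms n" "card Y \<le> Suc (card (diag_vars n Y))"
proof -
  show "diag_vars n Y \<subseteq> {..<n}" using Y by (auto simp: diag_vars_def)
  show "diag_base n v \<in> monoms n" using n by (auto simp: diag_base_def monoms_def)
  have "finite Y" using Y finite_subset by blast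
  have "card Y \<le> Suc (card (Y - {x}))" for x
    using \<open>finite Y\<close> by (cases "x \<in> Y") (simp_all add: card_Suc_Diff1)
  moreover have "diag_vars n Y = Y - {if n - 1 \<in> Y \<and> n \<in> Y then n else if n - 1 \<in> Y then n - 1 else n}"
    by (auto simp: diag_vars_def)
  ultimately show "card Y \<le> Suc (card (diag_vars n Y))" by presburger
qed

lemma stanley_decomp_pullback:
  fixes f :: "mon \<Rightarrow> mon" and G :: "mon \<Rightarrow> nat set \<Rightarrow> (mon \<times> nat set) set"
  assumes D: "stanley_decomp m I J D"
    and I': "I' \<subseteq> monoms m'" and IJ': "I' - J' = {w \<in> monoms m'. f w \<in> I - J}"
    and G_finite: "\<And>u Z. (u, Z) \<in> D \<Longrightarrow> finite (G u Z)"
    and G_wf: "\<And>u Z v Y. (u, Z) \<in> D \<Longrightarrow> (v, Y) \<in> G u Z \<Longrightarrow> Y \<subseteq> {..<m'} \<and> v \<in> monoms m'"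
    and G_preimage: "\<And>u Z w. (u, Z) \<in> D \<Longrightarrow> w \<in> monoms m' \<Longrightarrow>
      f w \<in> cone u Z \<longleftrightarrow> (\<exists>(v, Y)\<in>G u Z. w \<in> cone v Y)"
    and G_disjoint: "\<And>u Z p q. (u, Z) \<in> D \<Longrightarrow> p \<in> G u Z \<Longrightarrow> q \<in> G u Z \<Longrightarrow> p \<noteq> q \<Longrightarrow>
      cone (fst p) (snd p) \<inter> cone (fst q) (snd q) = {}"
  shows "stanley_decomp m' I' J' (\<Union>(u, Z)\<in>D. G u Z)"
proof -
  let ?P = "\<lambda>u Z. {w \<in> monoms m'. f w \<in> cone u Z}"
  have cone_P: "cone (fst p) (snd p) \<subseteq> ?P u Z" if "(u, Z) \<in> D" "p \<in> G u Z" for u Z p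
  proof -
    have "cone (fst p) (snd p) \<subseteq> monoms m'"
      using G_wf[OF that(1), of "fst p" "snd p"] that(2) by (intro cone_monoms) auto
    then show ?thesis using G_preimage[OF that(1)] that(2) by fastforce
  qed
  have P_D: "(\<Union>(u, Z)\<in>D. ?P u Z) = {w \<in> monoms m'. f w \<in> I - J}"
    using stanley_decompD(4)[OF D] by blast
  show ?thesis
  proof (rule stanley_decompI)
    show "finite (\<Union>(u, Z)\<in>D. G u Z)" using stanley_decompD(1)[OF D] G_finite by auto
    show "I' \<subseteq> monoms m'" by (fact I')
    show "Y \<subseteq> {..<m'}" if "(v, Y) \<in> (\<Union>(u, Z)\<in>D. G u Z)" for v Y
      using that G_wf by blast
    show "cone (fst p) (snd p) \<inter> cone (fst q) (snd q) = {}"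
      if pq: "p \<in> (\<Union>(u, Z)\<in>D. G u Z)" "q \<in> (\<Union>(u, Z)\<in>D. G u Z)" "p \<noteq> q" for p q
    proof -
      obtain u Z u' Z' where uZ: "(u, Z) \<in> D" "p \<in> G u Z" and uZ': "(u', Z') \<in> D" "q \<in> G u' Z'"
        using pq(1,2) by blast
      show ?thesis
      proof (cases "(u, Z) = (u', Z')")
        case True
        then show ?thesis using G_disjoint uZ uZ' \<open>p \<noteq> q\<close> by blast
      next
        case False
        then have "cone u Z \<inter> cone u' Z' = {}" using stanley_decompD(3)[OF D uZ(1) uZ'(1)] by simp
        then show ?thesis using cone_P[OF uZ] cone_P[OF uZ'] by blast
      qed
    qed
    have "(\<Union>(v, Y)\<in>G u Z. cone v Y) = ?P u Z" if "(u, Z) \<in> D" for u Z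
      using G_preimage[OF that] cone_P[OF that] by fastforce
    then have "(\<Union>(u, Z)\<in>D. \<Union>(v, Y)\<in>G u Z. cone v Y) = (\<Union>(u, Z)\<in>D. ?P u Z)"
      by (intro SUP_cong) auto
    moreover have "(\<Union>(v, Y)\<in>(\<Union>(u, Z)\<in>D. G u Z). cone v Y) = (\<Union>(u, Z)\<in>D. \<Union>(v, Y)\<in>G u Z. cone v Y)"
      by (simp add: UN_UN_flatten split_def)
    ultimately have "(\<Union>(v, Y)\<in>(\<Union>(u, Z)\<in>D. G u Z). cone v Y) = (\<Union>(u, Z)\<in>D. ?P u Z)"
      by simp
    then show "(\<Union>(v, Y)\<in>(\<Union>(u, Z)\<in>D. G u Z). cone v Y) = I' - J'"
      using P_D IJ' by simp
  qed
qed

lemma stanley_decomp_lift_ideal: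
  assumes n: "n \<ge> 1" and I: "mon_ideal n I" and J: "mon_ideal n J" and D: "stanley_decomp n I J D"
  shows "stanley_decomp (Suc n) (lift_ideal n I) (lift_ideal n J) (\<Union>(u, Z)\<in>D. lift_cones n u Z)"
proof (rule stanley_decomp_pullback[OF D, where f = "merge_last n"])
  show "lift_ideal n I \<subseteq> monoms (Suc n)" using lift_ideal_eq[OF n I] by blast
  show "lift_ideal n I - lift_ideal n J = {w \<in> monoms (Suc n). merge_last n w \<in> I - J}"
    unfolding lift_ideal_eq[OF n I] lift_ideal_eq[OF n J] by blast
  show "finite (lift_cones n u Z)" for u Z by (simp add: lift_cones_def)
  fix u Z assume "(u, Z) \<in> D"
  then have uZ: "u \<in> monoms n" "Z \<subseteq> {..<n}" using stanley_decompD(2)[OF D] by auto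
  show "Y \<subseteq> {..<Suc n} \<and> v \<in> monoms (Suc n)" if "(v, Y) \<in> lift_cones n u Z" for v Y
    using lift_cones_wf[OF n uZ that] by blast
  show "merge_last n w \<in> cone u Z \<longleftrightarrow> (\<exists>(v, Y)\<in>lift_cones n u Z. w \<in> cone v Y)"
    if "w \<in> monoms (Suc n)" for w
    using merge_last_mem_cone[OF n uZ that] .
  show "cone (fst p) (snd p) \<inter> cone (fst q) (snd q) = {}"
    if "p \<in> lift_cones n u Z" "q \<in> lift_cones n u Z" "p \<noteq> q" for p q
    using lift_cones_disjoint[OF n that] .
qed

definition diag_cones :: "nat \<Rightarrow> mon \<Rightarrow> nat set \<Rightarrow> (mon \<times> nat set) set" where
  "diag_cones n v Y = (if meets_diag n v Y then {(diag_base n v, diag_vars n Y)} else {})"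

lemma stanley_decomp_of_lift_ideal:
  assumes n: "n \<ge> 1" and I: "mon_ideal n I" and J: "mon_ideal n J"
    and D: "stanley_decomp (Suc n) (lift_ideal n I) (lift_ideal n J) D"
  shows "stanley_decomp n I J (\<Union>(v, Y)\<in>D. diag_cones n v Y)"
proof (rule stanley_decomp_pullback[OF D, where f = "subst_last n"])
  show IM: "I \<subseteq> monoms n" using I by (simp add: mon_ideal_def)
  show "I - J = {w \<in> monoms n. subst_last n w \<in> lift_ideal n I - lift_ideal n J}"
    unfolding lift_ideal_eq[OF n I] lift_ideal_eq[OF n J]
    using IM merge_last_subst_last[OF n] subst_last_monoms[OF n] by auto
  show "finite (diag_cones n v Y)" for v Y by (simp add: diag_cones_def)
  fix v Y assume "(v, Y) \<in> D"
  then have vY: "v \<in> monoms (Suc n)" "Y \<subseteq> {..<Suc n}" using stanley_decompD(2)[OF D] by auto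
  show "Z \<subseteq> {..<n} \<and> u \<in> monoms n" if "(u, Z) \<in> diag_cones n v Y" for u Z
    using that diag_wf[OF n vY(2)] by (auto simp: diag_cones_def split: if_splits)
  show "subst_last n w \<in> cone v Y \<longleftrightarrow> (\<exists>(u, Z)\<in>diag_cones n v Y. w \<in> cone u Z)"
    if "w \<in> monoms n" for w
    using subst_last_mem_cone[OF n vY(1) that] by (simp add: diag_cones_def)
  show "cone (fst p) (snd p) \<inter> cone (fst q) (snd q) = {}"
    if "p \<in> diag_cones n v Y" "q \<in> diag_cones n v Y" "p \<noteq> q" for p q
    using that by (simp add: diag_cones_def split: if_splits)
qed

lemma sdecomp_depth_le: "finite D \<Longrightarrow> (u, Z) \<in> D \<Longrightarrow> sdecomp_depth D \<le> card Z"
  unfolding sdecomp_depth_def by (rule Min_le) force+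

lemma sdecomp_depth_ge:
  "finite D \<Longrightarrow> D \<noteq> {} \<Longrightarrow> (\<And>u Z. (u, Z) \<in> D \<Longrightarrow> k \<le> card Z) \<Longrightarrow> k \<le> sdecomp_depth D"
  unfolding sdecomp_depth_def by auto

lemma sdecomp_depth_attained:
  assumes "finite D" "D \<noteq> {}"
  obtains u Z where "(u, Z) \<in> D" "sdecomp_depth D = card Z"
proof -
  have "sdecomp_depth D \<in> (\<lambda>(u, Z). card Z) ` D"
    unfolding sdecomp_depth_def using assms by (intro Min_in) auto
  then show ?thesis using that by auto
qed

lemma stanley_decomp_nonempty: "stanley_decomp n I J D \<Longrightarrow> I - J \<noteq> {} \<Longrightarrow> D \<noteq> {}"
  using stanley_decompD(4) by fastforce

text \<open>The depth of the empty decomposition is the unspecified value Min {}.\<close>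
lemma finite_sdecomp_depths: "finite {sdecomp_depth D | D. stanley_decomp n I J D}"
proof -
  have "sdecomp_depth D \<in> insert (sdecomp_depth {}) {..n}" if D: "stanley_decomp n I J D" for D
  proof (cases "D = {}")
    case False
    then obtain u Z where "(u, Z) \<in> D" "sdecomp_depth D = card Z"
      using sdecomp_depth_attained stanley_decompD(1)[OF D] by blast
    moreover have "card Z \<le> n"
      using stanley_decompD(2)[OF D \<open>(u, Z) \<in> D\<close>] card_mono[of "{..<n}" Z] by simp
    ultimately show ?thesis by simp
  qed simp
  then have "{sdecomp_depth D | D. stanley_decomp n I J D} \<subseteq> insert (sdecomp_depth {}) {..n}"
    by blast
  then show ?thesis by (rule finite_subset) simp
qed

lemma sdepth_ge: "stanley_decomp n I J D \<Longrightarrow> sdecomp_depth D \<le> sdepth n I J"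
  unfolding sdepth_def using finite_sdecomp_depths by (intro Max_ge) auto

lemma sdepth_attained:
  assumes "stanley_decomp n I J D"
  obtains E where "stanley_decomp n I J E" "sdecomp_depth E = sdepth n I J"
proof -
  have "sdepth n I J \<in> {sdecomp_depth D | D. stanley_decomp n I J D}"
    unfolding sdepth_def using finite_sdecomp_depths assms by (intro Max_in) auto
  then show ?thesis using that by auto
qed

lemma sdepth_lift_ideal_ge:
  assumes n: "n \<ge> 1" and I: "mon_ideal n I" and J: "mon_ideal n J" and "I - J \<noteq> {}"
  shows "sdepth n I J + 1 \<le> sdepth (Suc n) (lift_ideal n I) (lift_ideal n J)"
proof -
  obtain D0 where "stanley_decomp n I J D0" using stanley_decomp_exists[OF I J] ..
  then obtain D where D: "stanley_decomp n I J D" "sdecomp_depth D = sdepth n I J"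
    by (rule sdepth_attained)
  define D' where "D' = (\<Union>(u, Z)\<in>D. lift_cones n u Z)"
  have D': "stanley_decomp (Suc n) (lift_ideal n I) (lift_ideal n J) D'"
    unfolding D'_def using stanley_decomp_lift_ideal[OF n I J D(1)] .
  obtain u Z where "(u, Z) \<in> D" using stanley_decomp_nonempty[OF D(1) assms(4)] by auto
  moreover have "(subst_last n u, insert n Z) \<in> lift_cones n u Z" by (simp add: lift_cones_def)
  ultimately have "D' \<noteq> {}" unfolding D'_def by blast
  then have "sdecomp_depth D + 1 \<le> sdecomp_depth D'"
  proof (rule sdecomp_depth_ge[OF stanley_decompD(1)[OF D']])
    fix v Y assume "(v, Y) \<in> D'"
    then obtain u Z where uZ: "(u, Z) \<in> D" "(v, Y) \<in> lift_cones n u Z" by (auto simp: D'_def)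
    then have "card Y = Suc (card Z)"
      using lift_cones_wf[OF n _ _ uZ(2)] stanley_decompD(2)[OF D(1)] by blast
    then show "sdecomp_depth D + 1 \<le> card Y"
      using sdecomp_depth_le[OF stanley_decompD(1)[OF D(1)] uZ(1)] by simp
  qed
  then show ?thesis using D(2) sdepth_ge[OF D'] by simp
qed

lemma sdepth_lift_ideal_le:
  assumes n: "n \<ge> 1" and I: "mon_ideal n I" and J: "mon_ideal n J" and "I - J \<noteq> {}"
  shows "sdepth (Suc n) (lift_ideal n I) (lift_ideal n J) \<le> sdepth n I J + 1"
proof -
  obtain D0 where "stanley_decomp n I J D0" using stanley_decomp_exists[OF I J] ..
  then have "stanley_decomp (Suc n) (lift_ideal n I) (lift_ideal n J) (\<Union>(u, Z)\<in>D0. lift_cones n u Z)"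
    by (rule stanley_decomp_lift_ideal[OF n I J])
  then obtain D' where D': "stanley_decomp (Suc n) (lift_ideal n I) (lift_ideal n J) D'"
      "sdecomp_depth D' = sdepth (Suc n) (lift_ideal n I) (lift_ideal n J)"
    by (rule sdepth_attained)
  define D where "D = (\<Union>(v, Y)\<in>D'. diag_cones n v Y)"
  have D: "stanley_decomp n I J D"
    unfolding D_def using stanley_decomp_of_lift_ideal[OF n I J D'(1)] .
  obtain u Z where uZ: "(u, Z) \<in> D" "sdecomp_depth D = card Z"
    using sdecomp_depth_attained stanley_decompD(1)[OF D] stanley_decomp_nonempty[OF D assms(4)] by metis
  then obtain v Y where vY: "(v, Y) \<in> D'" "(u, Z) \<in> diag_cones n v Y" by (auto simp: D_def)
  then have "card Y \<le> Suc (card Z)"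
    using diag_wf(3)[OF n] stanley_decompD(2)[OF D'(1)] by (auto simp: diag_cones_def split: if_splits)
  then have "sdecomp_depth D' \<le> sdecomp_depth D + 1"
    using sdecomp_depth_le[OF stanley_decompD(1)[OF D'(1)] vY(1)] uZ(2) by simp
  then show ?thesis using D'(2) sdepth_ge[OF D] by simp
qed

theorem proposition5p2:
  fixes n :: nat and I J :: "mon set"
  assumes "n \<ge> 1"
    and "mon_ideal n I" and "mon_ideal n J"
    and "J \<subset> I"
  shows "sdepth (Suc n) (lift_ideal n I) (lift_ideal n J) = sdepth n I J + 1"
proof -
  have "I - J \<noteq> {}" using assms(4) by blast
  then show ?thesis
    using sdepth_lift_ideal_ge[OF assms(1-3)] sdepth_lift_ideal_le[OF assms(1-3)] by (simp add: le_antisym)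
qed

end
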